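(* Let $a_1,b_1,a'_1,b'_1,a_2,b_2,a'_2,b'_2\ge 0$ be such that the vectors $v_1=(a'_1-a_1,\,b'_1-b_1)$ and $v_2=(a'_2-a_2,\,b'_2-b_2)$ are linearly independent, and let $\epsilon\in(0,1)$. For rate functions $k_1(t),k_2(t),k_3(t),k_4(t)$ consider the system on $\mathbb{R}^2_{>0}$ $$\begin{pmatrix}\dot x\\ \dot y\end{pmatrix}=\big(k_1(t)x^{a_1}y^{b_1}-k_2(t)x^{a'_1}y^{b'_1}\big)v_1+\big(k_3(t)x^{a_2}y^{b_2}-k_4(t)x^{a'_2}y^{b'_2}\big)v_2 .$$ Consider the curves $\mathcal{C}_1: x^{a'_1-a_1}y^{b'_1-b_1}=\frac{1}{\epsilon^2}$, $\mathcal{C}_2: x^{a'_1-a_1}y^{b'_1-b_1}=\epsilon^2$, $\mathcal{C}_3: x^{a'_2-a_2}y^{b'_2-b_2}=\epsilon^2$, $\mathcal{C}_4: x^{a'_2-a_2}y^{b'_2-b_2}=\frac{1}{\epsilon^2}$ in $\mathbb{R}^2_{>0}$, and let $A=\mathcal{C}_2\cap\mathcal{C}_4$, $B=\mathcal{C}_1\cap\mathcal{C}_4$, $C=\mathcal{C}_1\cap\mathcal{C}_3$, $D=\mathcal{C}_2\cap\mathcal{C}_3$ (each a single point). Let $\mathbf{x}(t)$ be a solution with $\mathbf{x}(0)\in\mathbb{R}^2_{>0}$. Then: (i) if $k_1\equiv\epsilon,k_2\equiv\frac1\epsilon,k_3\equiv\frac1\epsilon,k_4\equiv\epsilon$, then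 $\lim_{t\to\infty}\mathbf{x}(t)=A$; (ii) if $k_1\equiv\frac1\epsilon,k_2\equiv\epsilon,k_3\equiv\frac1\epsilon,k_4\equiv\epsilon$, then $\lim_{t\to\infty}\mathbf{x}(t)=B$; (iii) if $k_1\equiv\frac1\epsilon,k_2\equiv\epsilon,k_3\equiv\epsilon,k_4\equiv\frac1\epsilon$, then $\lim_{t\to\infty}\mathbf{x}(t)=C$; (iv) if $k_1\equiv\epsilon,k_2\equiv\frac1\epsilon,k_3\equiv\epsilon,k_4\equiv\frac1\epsilon$, then $\lim_{t\to\infty}\mathbf{x}(t)=D$.
   Context: The system is the mass-action system of the reaction network $a_1X+b_1Y\rightleftharpoons a'_1X+b'_1Y$ (forward rate $k_1$, backward rate $k_2$) and $a_2X+b_2Y\rightleftharpoons a'_2X+b'_2Y$ (forward rate $k_3$, backward rate $k_4$); in the variable-$k$ setting the rates are allowed to vary in time with values in $[\epsilon,1/\epsilon]$, here they are fixed constants. *)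

theory Defs
  imports "HOL-Analysis.Analysis"
begin

definition pos_quad :: "(real \<times> real) set" where
  "pos_quad = {p. fst p > 0 \<and> snd p > 0}"

definition mono2 :: "real \<Rightarrow> real \<Rightarrow> real \<times> real \<Rightarrow> real" where
  "mono2 a b p = fst p powr a * snd p powr b"

definition ma_field ::
  "real \<Rightarrow> real \<Rightarrow> real \<Rightarrow> real \<Rightarrow> real \<Rightarrow> real \<Rightarrow> real \<Rightarrow> real \<Rightarrow>
   real \<Rightarrow> real \<Rightarrow> real \<Rightarrow> real \<Rightarrow> real \<times> real \<Rightarrow> real \<times> real" where
  "ma_field a1 b1 a1' b1' a2 b2 a2' b2' k1 k2 k3 k4 p =
     (k1 * mono2 a1 b1 p - k2 * mono2 a1' b1' p) *\<^sub>R (a1' - a1, b1' - b1)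
   + (k3 * mono2 a2 b2 p - k4 * mono2 a2' b2' p) *\<^sub>R (a2' - a2, b2' - b2)"

definition is_solution ::
  "real \<Rightarrow> real \<Rightarrow> real \<Rightarrow> real \<Rightarrow> real \<Rightarrow> real \<Rightarrow> real \<Rightarrow> real \<Rightarrow>
   real \<Rightarrow> real \<Rightarrow> real \<Rightarrow> real \<Rightarrow> (real \<Rightarrow> real \<times> real) \<Rightarrow> bool" where
  "is_solution a1 b1 a1' b1' a2 b2 a2' b2' k1 k2 k3 k4 x \<longleftrightarrow>
     (\<forall>t\<ge>0. x t \<in> pos_quad \<and>
        (x has_vector_derivative
           ma_field a1 b1 a1' b1' a2 b2 a2' b2' k1 k2 k3 k4 (x t)) (at t within {0..}))"

end

theory Submission
  imports Defs
begin

(*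
  The equilibrium A is the unique positive point at which the monomials x^(a1' - a1) y^(b1' - b1)
  and x^(a2' - a2) y^(b2' - b2) equal the rate ratios k1/k2 and k3/k4; in logarithmic coordinates
  this is a nonsingular 2x2 linear system. The Horn-Jackson free energy, the sum of the relative
  entropies x ln (x / A1) - x + A1 and y ln (y / A2) - y + A2, decreases along solutions at a rate
  that vanishes only at A, and it grows at least linearly, so solutions stay bounded. They also
  stay away from the coordinate axes: the sign of each net reaction rate is fixed by comparing its
  monomial with the rate ratio, and this pushes suitable linear functionals n1 x + n2 y outward
  near the origin and near each axis. On the resulting compact part of the open quadrant the
  dissipation is bounded below away from A, so the solution converges to A. The four cases of the
  theorem are the rate choices with ratios eps^2 or 1/eps^2.
*)

lemma nonneg_at_left_limit:
  fixes f :: "real \<Rightarrow> real"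
  assumes cont: "continuous (at \<tau> within {0..}) f" and "0 < \<tau>"
    and before: "\<And>s. 0 \<le> s \<Longrightarrow> s < \<tau> \<Longrightarrow> 0 \<le> f s"
  shows "0 \<le> f \<tau>"
proof -
  have "(f \<longlongrightarrow> f \<tau>) (at_left \<tau>)"
    using tendsto_within_subset[OF cont[unfolded continuous_within], of "{0..\<tau>}"]
    by (simp add: at_within_Icc_at_left[OF \<open>0 < \<tau>\<close>])
  moreover have "\<forall>\<^sub>F s in at_left \<tau>. 0 \<le> f s"
    using eventually_at_left_real[OF \<open>0 < \<tau>\<close>] by eventually_elim (use before in auto)
  ultimately show ?thesis
    by (rule tendsto_lowerbound) simp
qed

lemma eventually_nonneg_at_right:
  fixes f :: "real \<Rightarrow> real"
  assumes df: "(f has_real_derivative l) (at \<tau> within {0..})" and "0 \<le> \<tau>"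
    and "0 \<le> f \<tau>" and l: "f \<tau> = 0 \<Longrightarrow> 0 < l"
  shows "\<forall>\<^sub>F s in at_right \<tau>. 0 \<le> f s"
proof (cases "f \<tau> = 0")
  case True
  obtain d where "0 < d" and inc: "\<And>h. 0 < h \<Longrightarrow> \<tau> + h \<in> {0..} \<Longrightarrow> h < d \<Longrightarrow> f \<tau> < f (\<tau> + h)"
    using has_real_derivative_pos_inc_right[OF df l[OF True]] by blast
  have "\<forall>\<^sub>F s in at_right \<tau>. s \<in> {\<tau><..<\<tau> + d}"
    using \<open>0 < d\<close> by (intro eventually_at_right_real) simp
  then show ?thesis
  proof eventually_elim
    case (elim s)
    then show ?case
      using inc[of "s - \<tau>"] True \<open>0 \<le> \<tau>\<close> by simp
  qed
next
  case False
  then have "0 < f \<tau>" using \<open>0 \<le> f \<tau>\<close> by simp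
  have "(f \<longlongrightarrow> f \<tau>) (at_right \<tau>)"
    using tendsto_within_subset[OF DERIV_continuous[OF df, unfolded continuous_within], of "{\<tau>..}"]
      \<open>0 \<le> \<tau>\<close> by (simp add: at_within_Ici_at_right)
  from order_tendstoD(1)[OF this \<open>0 < f \<tau>\<close>] show ?thesis
    by eventually_elim simp
qed

lemma nonneg_invariant_pair:
  fixes f g f' g' :: "real \<Rightarrow> real"
  assumes df: "\<And>t. 0 \<le> t \<Longrightarrow> (f has_real_derivative f' t) (at t within {0..})"
    and dg: "\<And>t. 0 \<le> t \<Longrightarrow> (g has_real_derivative g' t) (at t within {0..})"
    and f0: "0 \<le> f 0" and g0: "0 \<le> g 0"
    and f_inward: "\<And>t. 0 \<le> t \<Longrightarrow> f t = 0 \<Longrightarrow> 0 \<le> g t \<Longrightarrow> 0 < f' t"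
    and g_inward: "\<And>t. 0 \<le> t \<Longrightarrow> g t = 0 \<Longrightarrow> 0 \<le> f t \<Longrightarrow> 0 < g' t"
    and "0 \<le> t"
  shows "0 \<le> f t \<and> 0 \<le> g t"
proof (rule ccontr)
  define bad where "bad = {s. 0 \<le> s \<and> (f s < 0 \<or> g s < 0)}"
  assume "\<not> ?thesis"
  then have "t \<in> bad" using \<open>0 \<le> t\<close> by (auto simp: bad_def)
  define \<tau> where "\<tau> = Inf bad"
  have "bdd_below bad" unfolding bad_def by (rule bdd_belowI[of _ 0]) auto
  then have \<tau>_le: "\<tau> \<le> s" if "s \<in> bad" for s
    using that cInf_lower unfolding \<tau>_def by blast
  have "0 \<le> \<tau>" unfolding \<tau>_def using \<open>t \<in> bad\<close> by (intro cInf_greatest) (auto simp: bad_def)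
  have before: "0 \<le> f s \<and> 0 \<le> g s" if "0 \<le> s" "s < \<tau>" for s
    using \<tau>_le[of s] that unfolding bad_def by force
  have at_\<tau>: "0 \<le> f \<tau> \<and> 0 \<le> g \<tau>"
  proof (cases "\<tau> = 0")
    case False
    then have "0 < \<tau>" using \<open>0 \<le> \<tau>\<close> by simp
    show ?thesis
      using nonneg_at_left_limit[OF DERIV_continuous[OF df[OF \<open>0 \<le> \<tau>\<close>]] \<open>0 < \<tau>\<close>]
        nonneg_at_left_limit[OF DERIV_continuous[OF dg[OF \<open>0 \<le> \<tau>\<close>]] \<open>0 < \<tau>\<close>] before
      by blast
  qed (use f0 g0 in simp)
  have "\<forall>\<^sub>F s in at_right \<tau>. 0 \<le> f s \<and> 0 \<le> g s"
    using eventually_nonneg_at_right[OF df[OF \<open>0 \<le> \<tau>\<close>] \<open>0 \<le> \<tau>\<close>]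
      eventually_nonneg_at_right[OF dg[OF \<open>0 \<le> \<tau>\<close>] \<open>0 \<le> \<tau>\<close>]
      f_inward[OF \<open>0 \<le> \<tau>\<close>] g_inward[OF \<open>0 \<le> \<tau>\<close>] at_\<tau>
    by (simp add: eventually_conj_iff)
  then obtain b where "\<tau> < b" and after: "\<And>s. \<tau> < s \<Longrightarrow> s < b \<Longrightarrow> 0 \<le> f s \<and> 0 \<le> g s"
    unfolding eventually_at_right_field by blast
  have "b \<le> \<tau>"
    unfolding \<tau>_def
  proof (rule cInf_greatest)
    show "bad \<noteq> {}" using \<open>t \<in> bad\<close> by blast
    fix s assume "s \<in> bad"
    then show "b \<le> s"
      using \<tau>_le[OF \<open>s \<in> bad\<close>] at_\<tau> after[of s] unfolding bad_def by force
  qed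
  then show False using \<open>\<tau> < b\<close> by simp
qed

lemma nonneg_invariant:
  fixes f f' :: "real \<Rightarrow> real"
  assumes "\<And>t. 0 \<le> t \<Longrightarrow> (f has_real_derivative f' t) (at t within {0..})"
    and "0 \<le> f 0" and "\<And>t. 0 \<le> t \<Longrightarrow> f t = 0 \<Longrightarrow> 0 < f' t" and "0 \<le> t"
  shows "0 \<le> f t"
  using nonneg_invariant_pair[where g = "\<lambda>_. 1" and g' = "\<lambda>_. 0", OF assms(1) DERIV_const]
    assms(2-4) by simp

lemma powr_less_near_zero:
  fixes a \<kappa> :: real
  assumes "0 < a" "0 < \<kappa>"
  obtains c where "0 < c" "\<And>s. 0 < s \<Longrightarrow> s \<le> c \<Longrightarrow> s powr a < \<kappa>"
proof
  show "0 < (\<kappa>/2) powr (1/a)" using assms by simp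
  fix s assume "0 < s" "s \<le> (\<kappa>/2) powr (1/a)"
  then have "s powr a \<le> ((\<kappa>/2) powr (1/a)) powr a" using assms by (intro powr_mono2) auto
  also have "\<dots> = \<kappa>/2" using assms by (simp add: powr_powr)
  finally show "s powr a < \<kappa>" using assms by simp
qed

lemma powr_mult_le_mixed:
  fixes x x' y y' a b :: real
  assumes "0 < x" "x \<le> x'" "0 < y'" "y' \<le> y" "0 \<le> a" "b \<le> 0"
  shows "x powr a * y powr b \<le> x' powr a * y' powr b"
  using assms by (intro mult_mono powr_mono2 powr_mono2') auto

lemma small_monomials_near_origin:
  fixes \<alpha>1 \<beta>1 \<alpha>2 \<beta>2 \<mu>1 \<mu>2 \<kappa>1 \<kappa>2 \<rho> :: real
  assumes \<mu>: "0 < \<mu>1" "0 < \<mu>2" "0 < \<mu>1 * \<alpha>1 + \<mu>2 * \<beta>1" "0 < \<mu>1 * \<alpha>2 + \<mu>2 * \<beta>2"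
    and "0 < \<kappa>1" "0 < \<kappa>2" "0 < \<rho>"
  obtains P1 P2 where "0 < P1" "P1 < \<rho>" "0 < P2" "P2 < \<rho>"
    "P1 powr \<alpha>1 * P2 powr \<beta>1 < \<kappa>1" "P1 powr \<alpha>2 * P2 powr \<beta>2 < \<kappa>2"
proof -
  obtain c1 where "0 < c1" "\<And>s. 0 < s \<Longrightarrow> s \<le> c1 \<Longrightarrow> s powr (\<mu>1 * \<alpha>1 + \<mu>2 * \<beta>1) < \<kappa>1"
    using powr_less_near_zero[OF \<mu>(3) \<open>0 < \<kappa>1\<close>] by blast
  moreover obtain c2 where "0 < c2" "\<And>s. 0 < s \<Longrightarrow> s \<le> c2 \<Longrightarrow> s powr (\<mu>1 * \<alpha>2 + \<mu>2 * \<beta>2) < \<kappa>2"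
    using powr_less_near_zero[OF \<mu>(4) \<open>0 < \<kappa>2\<close>] by blast
  moreover obtain c3 where "0 < c3" "\<And>s. 0 < s \<Longrightarrow> s \<le> c3 \<Longrightarrow> s powr \<mu>1 < \<rho>"
    using powr_less_near_zero[OF \<mu>(1) \<open>0 < \<rho>\<close>] by blast
  moreover obtain c4 where "0 < c4" "\<And>s. 0 < s \<Longrightarrow> s \<le> c4 \<Longrightarrow> s powr \<mu>2 < \<rho>"
    using powr_less_near_zero[OF \<mu>(2) \<open>0 < \<rho>\<close>] by blast
  moreover define s where "s = min (min c1 c2) (min c3 c4)"
  moreover have "(s powr \<mu>1) powr \<alpha> * (s powr \<mu>2) powr \<beta> = s powr (\<mu>1 * \<alpha> + \<mu>2 * \<beta>)" for \<alpha> \<beta>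
    by (simp add: powr_powr powr_add)
  ultimately show ?thesis
    by (intro that[of "s powr \<mu>1" "s powr \<mu>2"]) auto
qed

lemma wedge_corner_near_origin:
  fixes \<alpha>1 \<beta>1 \<alpha>2 \<beta>2 \<kappa>1 \<kappa>2 x0 y0 :: real
  assumes "\<alpha>1 < 0" "0 < \<beta>1" "0 < \<alpha>2" "\<beta>2 < 0" "\<alpha>1 * \<beta>2 < \<alpha>2 * \<beta>1"
    and "0 < \<kappa>1" "0 < \<kappa>2" "0 < x0" "0 < y0"
  obtains P1 P2 where "0 < P1" "0 < P2"
    "\<beta>1 * P1 - \<alpha>1 * P2 \<le> \<beta>1 * x0 - \<alpha>1 * y0" "\<alpha>2 * P2 - \<beta>2 * P1 \<le> \<alpha>2 * y0 - \<beta>2 * x0"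
    "P1 powr \<alpha>1 * P2 powr \<beta>1 < \<kappa>1" "P1 powr \<alpha>2 * P2 powr \<beta>2 < \<kappa>2"
proof -
  define S where "S = \<beta>1 - \<alpha>1 + \<alpha>2 - \<beta>2"
  define m where "m = min (\<beta>1 * x0 - \<alpha>1 * y0) (\<alpha>2 * y0 - \<beta>2 * x0)"
  have "0 < S" using assms by (simp add: S_def)
  have "\<alpha>1 * y0 < 0" "0 < \<beta>1 * x0" "\<beta>2 * x0 < 0" "0 < \<alpha>2 * y0"
    using assms by (simp_all add: mult_neg_pos)
  then have "0 < \<beta>1 * x0 - \<alpha>1 * y0" "0 < \<alpha>2 * y0 - \<beta>2 * x0" by linarith+
  define r where "r = m / S"
  have "0 < r" using \<open>0 < S\<close> \<open>0 < \<beta>1 * x0 - \<alpha>1 * y0\<close> \<open>0 < \<alpha>2 * y0 - \<beta>2 * x0\<close>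
    by (simp add: r_def m_def)
  have gap: "0 < \<alpha>2 * \<beta>1 - \<alpha>1 * \<beta>2" using assms(5) by simp
  \<comment> \<open>The direction \<open>\<mu> = (- 2 \<beta>1 \<beta>2, \<alpha>1 \<beta>2 + \<alpha>2 \<beta>1)\<close> has positive inner product with
      both exponent vectors, so both monomials vanish along \<open>s \<mapsto> (s powr \<mu>1, s powr \<mu>2)\<close>.\<close>
  obtain P1 P2 where P: "0 < P1" "P1 < r" "0 < P2" "P2 < r"
    and small: "P1 powr \<alpha>1 * P2 powr \<beta>1 < \<kappa>1" "P1 powr \<alpha>2 * P2 powr \<beta>2 < \<kappa>2"
  proof (rule small_monomials_near_origin[of "- 2 * \<beta>1 * \<beta>2" "\<alpha>1 * \<beta>2 + \<alpha>2 * \<beta>1"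
        \<alpha>1 \<beta>1 \<alpha>2 \<beta>2 \<kappa>1 \<kappa>2 r])
    show "0 < - 2 * \<beta>1 * \<beta>2" using assms by (simp add: mult_pos_neg)
    show "0 < \<alpha>1 * \<beta>2 + \<alpha>2 * \<beta>1" using assms by (simp add: add_pos_pos mult_neg_neg)
    have "- 2 * \<beta>1 * \<beta>2 * \<alpha>1 + (\<alpha>1 * \<beta>2 + \<alpha>2 * \<beta>1) * \<beta>1 = \<beta>1 * (\<alpha>2 * \<beta>1 - \<alpha>1 * \<beta>2)"
      by (simp add: algebra_simps)
    then show "0 < - 2 * \<beta>1 * \<beta>2 * \<alpha>1 + (\<alpha>1 * \<beta>2 + \<alpha>2 * \<beta>1) * \<beta>1"
      using assms(2) gap by simp
    have "- 2 * \<beta>1 * \<beta>2 * \<alpha>2 + (\<alpha>1 * \<beta>2 + \<alpha>2 * \<beta>1) * \<beta>2 = - \<beta>2 * (\<alpha>2 * \<beta>1 - \<alpha>1 * \<beta>2)"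
      by (simp add: algebra_simps)
    then show "0 < - 2 * \<beta>1 * \<beta>2 * \<alpha>2 + (\<alpha>1 * \<beta>2 + \<alpha>2 * \<beta>1) * \<beta>2"
      using mult_neg_pos[OF assms(4) gap] by simp
  qed (use assms(6,7) \<open>0 < r\<close> in auto)
  have "\<beta>1 * P1 + (- \<alpha>1) * P2 \<le> \<beta>1 * r + (- \<alpha>1) * r"
    "\<alpha>2 * P2 + (- \<beta>2) * P1 \<le> \<alpha>2 * r + (- \<beta>2) * r"
    using P assms by (intro add_mono mult_left_mono; simp)+
  then have "\<beta>1 * P1 - \<alpha>1 * P2 \<le> (\<beta>1 - \<alpha>1) * r" "\<alpha>2 * P2 - \<beta>2 * P1 \<le> (\<alpha>2 - \<beta>2) * r"
    by (simp_all add: algebra_simps)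
  moreover have "(\<beta>1 - \<alpha>1) * r \<le> S * r" "(\<alpha>2 - \<beta>2) * r \<le> S * r"
    using \<open>0 < r\<close> assms(1-4) by (simp_all add: S_def)
  moreover have "S * r = m" using \<open>0 < S\<close> by (simp add: r_def)
  moreover have "m \<le> \<beta>1 * x0 - \<alpha>1 * y0" "m \<le> \<alpha>2 * y0 - \<beta>2 * x0" by (simp_all add: m_def)
  ultimately have "\<beta>1 * P1 - \<alpha>1 * P2 \<le> \<beta>1 * x0 - \<alpha>1 * y0" "\<alpha>2 * P2 - \<beta>2 * P1 \<le> \<alpha>2 * y0 - \<beta>2 * x0"
    by linarith+
  then show thesis using that P(1,3) small by blast
qed

lemma lincomb_pos:
  fixes a b n1 n2 :: real
  assumes "0 \<le> a" "0 \<le> b" "(a, b) \<noteq> (0, 0)" "0 < n1" "0 < n2"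
  shows "0 < n1 * a + n2 * b"
proof (cases "a = 0")
  case True
  then show ?thesis using assms by simp
next
  case False
  then show ?thesis using assms by (simp add: add_pos_nonneg)
qed

lemma signs_on_line_within_half_plane:
  fixes a1 b1 a2 b2 u w :: real
  assumes "0 < a1" "0 < b1" "a1 * b2 < a2 * b1"
    and on_line: "b1 * u + a1 * w = 0" and above: "0 \<le> b2 * u + a2 * w"
  shows "u \<le> 0" "0 \<le> w"
proof -
  have "a1 * (b2 * u + a2 * w) = u * (a1 * b2 - a2 * b1)"
    using on_line by (simp add: algebra_simps) (metis mult.left_commute mult_minus_right add_eq_0_iff2)
  moreover have "0 \<le> a1 * (b2 * u + a2 * w)" using above \<open>0 < a1\<close> by simp
  ultimately have "0 \<le> u * (a1 * b2 - a2 * b1)" by simp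
  then show "u \<le> 0" using assms(3) by (simp add: zero_le_mult_iff)
  then have "b1 * u \<le> 0" using \<open>0 < b1\<close> by (simp add: mult_nonneg_nonpos)
  then have "0 \<le> a1 * w" using on_line by linarith
  then show "0 \<le> w" using \<open>0 < a1\<close> by (simp add: zero_le_mult_iff)
qed

(*
  Persistence only uses the signs of the net rates R1 and R2. The symmetries below (swapping the
  reactions or the coordinates, reversing a reaction) reduce the boundary analysis to a few
  normalized sign patterns.
*)
locale two_reaction_traj =
  fixes X Y R1 R2 :: "real \<Rightarrow> real" and \<alpha>1 \<beta>1 \<alpha>2 \<beta>2 \<kappa>1 \<kappa>2 :: real
  assumes X_pos: "\<And>t. 0 \<le> t \<Longrightarrow> 0 < X t" and Y_pos: "\<And>t. 0 \<le> t \<Longrightarrow> 0 < Y t"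
    and X_deriv: "\<And>t. 0 \<le> t \<Longrightarrow> (X has_real_derivative R1 t * \<alpha>1 + R2 t * \<alpha>2) (at t within {0..})"
    and Y_deriv: "\<And>t. 0 \<le> t \<Longrightarrow> (Y has_real_derivative R1 t * \<beta>1 + R2 t * \<beta>2) (at t within {0..})"
    and R1_pos: "\<And>t. 0 \<le> t \<Longrightarrow> X t powr \<alpha>1 * Y t powr \<beta>1 < \<kappa>1 \<Longrightarrow> 0 < R1 t"
    and R1_neg: "\<And>t. 0 \<le> t \<Longrightarrow> \<kappa>1 < X t powr \<alpha>1 * Y t powr \<beta>1 \<Longrightarrow> R1 t < 0"
    and R2_pos: "\<And>t. 0 \<le> t \<Longrightarrow> X t powr \<alpha>2 * Y t powr \<beta>2 < \<kappa>2 \<Longrightarrow> 0 < R2 t"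
    and R2_neg: "\<And>t. 0 \<le> t \<Longrightarrow> \<kappa>2 < X t powr \<alpha>2 * Y t powr \<beta>2 \<Longrightarrow> R2 t < 0"
    and \<kappa>_pos: "0 < \<kappa>1" "0 < \<kappa>2"
begin

lemma swap_reactions: "two_reaction_traj X Y R2 R1 \<alpha>2 \<beta>2 \<alpha>1 \<beta>1 \<kappa>2 \<kappa>1"
  by unfold_locales
    (use X_pos Y_pos X_deriv Y_deriv R1_pos R1_neg R2_pos R2_neg \<kappa>_pos in \<open>auto simp: add.commute\<close>)

lemma swap_coordinates: "two_reaction_traj Y X R1 R2 \<beta>1 \<alpha>1 \<beta>2 \<alpha>2 \<kappa>1 \<kappa>2"
  by unfold_locales
    (use X_pos Y_pos X_deriv Y_deriv R1_pos R1_neg R2_pos R2_neg \<kappa>_pos in \<open>auto simp: mult.commute\<close>)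

lemma reverse_reaction1: "two_reaction_traj X Y (\<lambda>t. - R1 t) R2 (- \<alpha>1) (- \<beta>1) \<alpha>2 \<beta>2 (1 / \<kappa>1) \<kappa>2"
proof unfold_locales
  fix t :: real assume "0 \<le> t"
  have "X t powr - \<alpha>1 * Y t powr - \<beta>1 = 1 / (X t powr \<alpha>1 * Y t powr \<beta>1)"
    by (simp add: powr_minus divide_inverse)
  moreover have "0 < X t powr \<alpha>1 * Y t powr \<beta>1"
    using X_pos[OF \<open>0 \<le> t\<close>] Y_pos[OF \<open>0 \<le> t\<close>] by simp
  ultimately show "X t powr - \<alpha>1 * Y t powr - \<beta>1 < 1 / \<kappa>1 \<Longrightarrow> 0 < - R1 t"
    and "1 / \<kappa>1 < X t powr - \<alpha>1 * Y t powr - \<beta>1 \<Longrightarrow> - R1 t < 0"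
    using R1_pos[OF \<open>0 \<le> t\<close>] R1_neg[OF \<open>0 \<le> t\<close>] \<kappa>_pos(1)
    by (auto simp: field_simps)
qed (use X_pos Y_pos X_deriv Y_deriv R2_pos R2_neg \<kappa>_pos in auto)

lemma reverse_reaction2: "two_reaction_traj X Y R1 (\<lambda>t. - R2 t) \<alpha>1 \<beta>1 (- \<alpha>2) (- \<beta>2) \<kappa>1 (1 / \<kappa>2)"
  using two_reaction_traj.swap_reactions[OF two_reaction_traj.reverse_reaction1[OF swap_reactions]] .

lemma lincomb_deriv:
  assumes "0 \<le> t"
  shows "((\<lambda>t. n1 * X t + n2 * Y t - c) has_real_derivative
           R1 t * (n1 * \<alpha>1 + n2 * \<beta>1) + R2 t * (n1 * \<alpha>2 + n2 * \<beta>2)) (at t within {0..})"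
  using X_deriv[OF assms] Y_deriv[OF assms]
  by (auto intro!: derivative_eq_intros simp: algebra_simps)

lemma R1_pos_near_origin:
  assumes "0 \<le> \<alpha>1" "0 \<le> \<beta>1" "(\<alpha>1, \<beta>1) \<noteq> (0, 0)" "0 < n1" "0 < n2"
  obtains c where "0 < c" "\<And>t. 0 \<le> t \<Longrightarrow> n1 * X t + n2 * Y t \<le> c \<Longrightarrow> 0 < R1 t"
proof -
  define m where "m = min n1 n2"
  have "0 < m" using assms by (simp add: m_def)
  have "0 < \<alpha>1 + \<beta>1" using assms by auto
  obtain c where "0 < c" and small: "\<And>s. 0 < s \<Longrightarrow> s \<le> c \<Longrightarrow> s powr (\<alpha>1 + \<beta>1) < \<kappa>1"
    using powr_less_near_zero[OF \<open>0 < \<alpha>1 + \<beta>1\<close> \<kappa>_pos(1)] by blast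
  show thesis
  proof (rule that[of "m * c"])
    show "0 < m * c" using \<open>0 < m\<close> \<open>0 < c\<close> by simp
    fix t assume "0 \<le> t" and near: "n1 * X t + n2 * Y t \<le> m * c"
    have pos: "0 < X t" "0 < Y t" using X_pos Y_pos \<open>0 \<le> t\<close> by auto
    have "m * X t \<le> n1 * X t" "m * Y t \<le> n2 * Y t"
      using pos by (auto simp: m_def intro: mult_right_mono)
    then have "m * X t \<le> m * c" "m * Y t \<le> m * c"
      using near pos assms(4,5) by (smt (verit) mult_pos_pos)+
    then have "X t \<le> c" "Y t \<le> c" using \<open>0 < m\<close> by simp_all
    then have "X t powr \<alpha>1 * Y t powr \<beta>1 \<le> c powr \<alpha>1 * c powr \<beta>1"
      using pos assms(1,2) by (intro mult_mono powr_mono2) auto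
    also have "\<dots> < \<kappa>1" using small[OF \<open>0 < c\<close>] by (simp add: powr_add)
    finally show "0 < R1 t" using R1_pos \<open>0 \<le> t\<close> by blast
  qed
qed

lemma R1_term_pos_near_origin:
  assumes "0 \<le> \<alpha>1 * \<beta>1" "(\<alpha>1, \<beta>1) \<noteq> (0, 0)" "0 < n1" "0 < n2"
  obtains c where "0 < c"
    "\<And>t. 0 \<le> t \<Longrightarrow> n1 * X t + n2 * Y t \<le> c \<Longrightarrow> 0 < R1 t * (n1 * \<alpha>1 + n2 * \<beta>1)"
proof -
  consider "0 \<le> \<alpha>1" "0 \<le> \<beta>1" | "\<alpha>1 \<le> 0" "\<beta>1 \<le> 0"
    using assms(1) by (auto simp: zero_le_mult_iff)
  then show thesis
  proof cases
    case 1
    then have coef: "0 < n1 * \<alpha>1 + n2 * \<beta>1"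
      using assms(2-4) by (intro lincomb_pos) auto
    obtain c where "0 < c" and push: "\<And>t. 0 \<le> t \<Longrightarrow> n1 * X t + n2 * Y t \<le> c \<Longrightarrow> 0 < R1 t"
      using R1_pos_near_origin[OF 1 assms(2-4)] by blast
    show thesis by (rule that[OF \<open>0 < c\<close>]) (use push coef in simp)
  next
    case 2
    then have "0 < n1 * (- \<alpha>1) + n2 * (- \<beta>1)"
      using assms(2-4) by (intro lincomb_pos) auto
    then have coef: "n1 * \<alpha>1 + n2 * \<beta>1 < 0" by simp
    obtain c where "0 < c" and push: "\<And>t. 0 \<le> t \<Longrightarrow> n1 * X t + n2 * Y t \<le> c \<Longrightarrow> 0 < - R1 t"
      using two_reaction_traj.R1_pos_near_origin[OF reverse_reaction1, of n1 n2] 2 assms(2-4) by auto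
    show thesis by (rule that[OF \<open>0 < c\<close>]) (use push coef in \<open>simp add: mult_neg_neg\<close>)
  qed
qed

lemma corner_bound_definite:
  assumes "0 < n1" "0 < n2" "0 \<le> \<alpha>1 * \<beta>1" "(\<alpha>1, \<beta>1) \<noteq> (0, 0)"
    and "n1 * \<alpha>2 + n2 * \<beta>2 = 0 \<or> 0 \<le> \<alpha>2 * \<beta>2 \<and> (\<alpha>2, \<beta>2) \<noteq> (0, 0)"
  obtains c where "0 < c" "\<And>t. 0 \<le> t \<Longrightarrow> c \<le> n1 * X t + n2 * Y t"
proof -
  obtain c1 where "0 < c1" and push1:
    "\<And>t. 0 \<le> t \<Longrightarrow> n1 * X t + n2 * Y t \<le> c1 \<Longrightarrow> 0 < R1 t * (n1 * \<alpha>1 + n2 * \<beta>1)"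
    using R1_term_pos_near_origin[OF assms(3,4,1,2)] by blast
  obtain c2 where "0 < c2" and push2:
    "\<And>t. 0 \<le> t \<Longrightarrow> n1 * X t + n2 * Y t \<le> c2 \<Longrightarrow> 0 \<le> R2 t * (n1 * \<alpha>2 + n2 * \<beta>2)"
  proof (cases "n1 * \<alpha>2 + n2 * \<beta>2 = 0")
    case False
    with assms(5) obtain c2 where "0 < c2"
      "\<And>t. 0 \<le> t \<Longrightarrow> n1 * X t + n2 * Y t \<le> c2 \<Longrightarrow> 0 < R2 t * (n1 * \<alpha>2 + n2 * \<beta>2)"
      using two_reaction_traj.R1_term_pos_near_origin[OF swap_reactions, of n1 n2] assms(1,2) by blast
    then show thesis using that[of c2] by (simp add: less_imp_le)
  qed (use that[of 1] in simp)
  define c where "c = min (min c1 c2) (n1 * X 0 + n2 * Y 0)"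
  have "0 < c" using \<open>0 < c1\<close> \<open>0 < c2\<close> X_pos[of 0] Y_pos[of 0] assms(1,2)
    by (simp add: c_def add_pos_pos)
  have "0 \<le> n1 * X t + n2 * Y t - c" if "0 \<le> t" for t
  proof (rule nonneg_invariant[OF lincomb_deriv _ _ that])
    show "0 \<le> n1 * X 0 + n2 * Y 0 - c" by (simp add: c_def)
    fix s assume "0 \<le> s" "n1 * X s + n2 * Y s - c = 0"
    then have "n1 * X s + n2 * Y s \<le> c1" "n1 * X s + n2 * Y s \<le> c2" by (simp_all add: c_def)
    then show "0 < R1 s * (n1 * \<alpha>1 + n2 * \<beta>1) + R2 s * (n1 * \<alpha>2 + n2 * \<beta>2)"
      using push1 push2 \<open>0 \<le> s\<close> by (simp add: add_pos_nonneg)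
  qed
  then show thesis using that \<open>0 < c\<close> by simp
qed

lemma R1_pos_upper_left:
  assumes "0 \<le> t" "0 \<le> \<alpha>1" "\<beta>1 \<le> 0" "X t \<le> P1" "0 < P2" "P2 \<le> Y t"
    and "P1 powr \<alpha>1 * P2 powr \<beta>1 < \<kappa>1"
  shows "0 < R1 t"
proof -
  have "X t powr \<alpha>1 * Y t powr \<beta>1 \<le> P1 powr \<alpha>1 * P2 powr \<beta>1"
    using X_pos[OF assms(1)] assms(2-6) by (intro powr_mult_le_mixed) auto
  then show ?thesis using R1_pos[OF assms(1)] assms(7) by simp
qed

(*
  N1 is conserved by reaction 1 and N2 by reaction 2. On the edge N1 = 0 of the wedge N1, N2 >= 0 the
  state lies up and to the left of the corner P, where reaction 2 runs forward and increases N1; on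
  the edge N2 = 0 it lies down and to the right, where reaction 1 increases N2.
*)
lemma corner_bound_mixed_normalized:
  assumes "\<alpha>1 < 0" "0 < \<beta>1" "0 < \<alpha>2" "\<beta>2 < 0" "\<alpha>1 * \<beta>2 < \<alpha>2 * \<beta>1"
  obtains c where "0 < c" "\<And>t. 0 \<le> t \<Longrightarrow> c \<le> \<beta>1 * X t - \<alpha>1 * Y t"
proof -
  obtain P1 P2 where P: "0 < P1" "0 < P2"
    and C_le: "\<beta>1 * P1 - \<alpha>1 * P2 \<le> \<beta>1 * X 0 - \<alpha>1 * Y 0" "\<alpha>2 * P2 - \<beta>2 * P1 \<le> \<alpha>2 * Y 0 - \<beta>2 * X 0"
    and small: "P1 powr \<alpha>1 * P2 powr \<beta>1 < \<kappa>1" "P1 powr \<alpha>2 * P2 powr \<beta>2 < \<kappa>2"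
    using wedge_corner_near_origin[OF assms \<kappa>_pos X_pos[of 0] Y_pos[of 0]] by auto
  define N1 where "N1 t = \<beta>1 * X t - \<alpha>1 * Y t - (\<beta>1 * P1 - \<alpha>1 * P2)" for t
  define N2 where "N2 t = \<alpha>2 * Y t - \<beta>2 * X t - (\<alpha>2 * P2 - \<beta>2 * P1)" for t
  have gap: "0 < \<alpha>2 * \<beta>1 - \<alpha>1 * \<beta>2" using assms(5) by simp
  have N1_deriv: "(N1 has_real_derivative R2 t * (\<alpha>2 * \<beta>1 - \<alpha>1 * \<beta>2)) (at t within {0..})"
    and N2_deriv: "(N2 has_real_derivative R1 t * (\<alpha>2 * \<beta>1 - \<alpha>1 * \<beta>2)) (at t within {0..})"
    if "0 \<le> t" for t
    using lincomb_deriv[OF that, of \<beta>1 "- \<alpha>1" "\<beta>1 * P1 - \<alpha>1 * P2"]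
      lincomb_deriv[OF that, of "- \<beta>2" \<alpha>2 "\<alpha>2 * P2 - \<beta>2 * P1"]
    by (simp_all add: N1_def[abs_def] N2_def[abs_def] algebra_simps)
  have "\<alpha>1 * P2 < 0" "0 < \<beta>1 * P1" using P assms by (simp_all add: mult_neg_pos)
  then have "0 < \<beta>1 * P1 - \<alpha>1 * P2" by linarith
  moreover have "0 \<le> N1 t" if "0 \<le> t" for t
  proof (rule nonneg_invariant_pair[OF N1_deriv N2_deriv _ _ _ _ that, THEN conjunct1])
    fix s assume s: "0 \<le> s" "N1 s = 0" "0 \<le> N2 s"
    have "X s - P1 \<le> 0" "0 \<le> Y s - P2"
      using signs_on_line_within_half_plane[of "- \<alpha>1" \<beta>1 "- \<beta>2" \<alpha>2 "X s - P1" "Y s - P2"] s assms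
      by (auto simp: N1_def N2_def algebra_simps)
    then have "0 < R2 s"
      using two_reaction_traj.R1_pos_upper_left[OF swap_reactions s(1)] P assms small by simp
    then show "0 < R2 s * (\<alpha>2 * \<beta>1 - \<alpha>1 * \<beta>2)" using gap by simp
  next
    fix s assume s: "0 \<le> s" "N2 s = 0" "0 \<le> N1 s"
    have "Y s - P2 \<le> 0" "0 \<le> X s - P1"
      using signs_on_line_within_half_plane[of "- \<beta>2" \<alpha>2 "- \<alpha>1" \<beta>1 "Y s - P2" "X s - P1"] s assms
      by (auto simp: N1_def N2_def algebra_simps)
    then have "0 < R1 s"
      using two_reaction_traj.R1_pos_upper_left[OF swap_coordinates s(1)] P assms small
      by (simp add: mult.commute)
    then show "0 < R1 s * (\<alpha>2 * \<beta>1 - \<alpha>1 * \<beta>2)" using gap by simp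
  qed (use C_le in \<open>simp_all add: N1_def N2_def\<close>)
  ultimately show thesis using that[of "\<beta>1 * P1 - \<alpha>1 * P2"] by (simp add: N1_def)
qed

lemma corner_bound_mixed_alpha2_pos:
  assumes "\<alpha>1 * \<beta>1 < 0" "0 < \<alpha>2" "\<beta>2 < 0" "\<bar>\<alpha>1\<bar> * \<bar>\<beta>2\<bar> < \<bar>\<alpha>2\<bar> * \<bar>\<beta>1\<bar>"
  obtains c where "0 < c" "\<And>t. 0 \<le> t \<Longrightarrow> c \<le> \<bar>\<beta>1\<bar> * X t + \<bar>\<alpha>1\<bar> * Y t"
proof (cases "0 < \<beta>1")
  case True
  then have "\<alpha>1 < 0" using assms(1) by (simp add: mult_less_0_iff)
  have "\<alpha>1 * \<beta>2 < \<alpha>2 * \<beta>1" using assms(2-4) \<open>\<alpha>1 < 0\<close> True by simp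
  then obtain c where "0 < c" "\<And>t. 0 \<le> t \<Longrightarrow> c \<le> \<beta>1 * X t - \<alpha>1 * Y t"
    using corner_bound_mixed_normalized[OF \<open>\<alpha>1 < 0\<close> True assms(2,3)] by blast
  then show thesis using that \<open>\<alpha>1 < 0\<close> True by simp
next
  case False
  then have "\<beta>1 < 0" "0 < \<alpha>1" using assms(1) by (auto simp: mult_less_0_iff)
  have "- \<alpha>1 < 0" "0 < - \<beta>1" "- \<alpha>1 * \<beta>2 < \<alpha>2 * - \<beta>1"
    using assms(2-4) \<open>\<beta>1 < 0\<close> \<open>0 < \<alpha>1\<close> by simp_all
  then obtain c where "0 < c" "\<And>t. 0 \<le> t \<Longrightarrow> c \<le> - \<beta>1 * X t - - \<alpha>1 * Y t"
    using two_reaction_traj.corner_bound_mixed_normalized[OF reverse_reaction1 _ _ assms(2,3)] by blast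
  then show thesis using that \<open>\<beta>1 < 0\<close> \<open>0 < \<alpha>1\<close> by simp
qed

lemma corner_bound_mixed_ordered:
  assumes "\<alpha>1 * \<beta>1 < 0" "\<alpha>2 * \<beta>2 < 0" "\<bar>\<alpha>1\<bar> * \<bar>\<beta>2\<bar> < \<bar>\<alpha>2\<bar> * \<bar>\<beta>1\<bar>"
  obtains c where "0 < c" "\<And>t. 0 \<le> t \<Longrightarrow> c \<le> \<bar>\<beta>1\<bar> * X t + \<bar>\<alpha>1\<bar> * Y t"
proof (cases "0 < \<alpha>2")
  case True
  then have "\<beta>2 < 0" using assms(2) by (simp add: mult_less_0_iff)
  show thesis using corner_bound_mixed_alpha2_pos[OF assms(1) True \<open>\<beta>2 < 0\<close> assms(3)] that by blast
next
  case False
  then have "0 < - \<alpha>2" "- \<beta>2 < 0" using assms(2) by (auto simp: mult_less_0_iff)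
  then show thesis
    using two_reaction_traj.corner_bound_mixed_alpha2_pos[OF reverse_reaction2 assms(1)] assms(3) that
    by auto
qed

lemma corner_bound_mixed:
  assumes "\<alpha>1 * \<beta>2 - \<beta>1 * \<alpha>2 \<noteq> 0" "\<alpha>1 * \<beta>1 < 0" "\<alpha>2 * \<beta>2 < 0"
  obtains n1 n2 c where "0 < n1" "0 < n2" "0 < c" "\<And>t. 0 \<le> t \<Longrightarrow> c \<le> n1 * X t + n2 * Y t"
proof -
  have pos: "0 < \<bar>\<alpha>1\<bar>" "0 < \<bar>\<beta>1\<bar>" "0 < \<bar>\<alpha>2\<bar>" "0 < \<bar>\<beta>2\<bar>"
    using assms(2,3) by (auto simp: mult_less_0_iff)
  have "\<bar>\<alpha>1\<bar> * \<bar>\<beta>2\<bar> \<noteq> \<bar>\<alpha>2\<bar> * \<bar>\<beta>1\<bar>"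
  proof
    assume "\<bar>\<alpha>1\<bar> * \<bar>\<beta>2\<bar> = \<bar>\<alpha>2\<bar> * \<bar>\<beta>1\<bar>"
    then have "\<alpha>1 * \<beta>2 = \<beta>1 * \<alpha>2"
      using assms(2,3) by (auto simp: mult_less_0_iff abs_if algebra_simps split: if_splits)
    then show False using assms(1) by simp
  qed
  then consider "\<bar>\<alpha>1\<bar> * \<bar>\<beta>2\<bar> < \<bar>\<alpha>2\<bar> * \<bar>\<beta>1\<bar>" | "\<bar>\<alpha>2\<bar> * \<bar>\<beta>1\<bar> < \<bar>\<alpha>1\<bar> * \<bar>\<beta>2\<bar>"
    by linarith
  then show thesis
  proof cases
    case 1
    then obtain c where "0 < c" "\<And>t. 0 \<le> t \<Longrightarrow> c \<le> \<bar>\<beta>1\<bar> * X t + \<bar>\<alpha>1\<bar> * Y t"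
      using corner_bound_mixed_ordered assms(2,3) by blast
    then show thesis using that[OF pos(2,1)] by blast
  next
    case 2
    then obtain c where "0 < c" "\<And>t. 0 \<le> t \<Longrightarrow> c \<le> \<bar>\<beta>2\<bar> * X t + \<bar>\<alpha>2\<bar> * Y t"
      using two_reaction_traj.corner_bound_mixed_ordered[OF swap_reactions] assms(2,3) by blast
    then show thesis using that[OF pos(4,3)] by blast
  qed
qed

lemma corner_bound:
  assumes "\<alpha>1 * \<beta>2 - \<beta>1 * \<alpha>2 \<noteq> 0"
  obtains n1 n2 c where "0 < n1" "0 < n2" "0 < c" "\<And>t. 0 \<le> t \<Longrightarrow> c \<le> n1 * X t + n2 * Y t"
proof -
  have nz: "(\<alpha>1, \<beta>1) \<noteq> (0, 0)" "(\<alpha>2, \<beta>2) \<noteq> (0, 0)" using assms by auto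
  have balanced: "\<bar>\<beta>\<bar> * \<alpha> + \<bar>\<alpha>\<bar> * \<beta> = 0" "0 < \<bar>\<alpha>\<bar>" "0 < \<bar>\<beta>\<bar>" if "\<alpha> * \<beta> < 0" for \<alpha> \<beta> :: real
    using that by (auto simp: mult_less_0_iff)
  consider "0 \<le> \<alpha>1 * \<beta>1" "0 \<le> \<alpha>2 * \<beta>2" | "0 \<le> \<alpha>1 * \<beta>1" "\<alpha>2 * \<beta>2 < 0"
    | "\<alpha>1 * \<beta>1 < 0" "0 \<le> \<alpha>2 * \<beta>2" | "\<alpha>1 * \<beta>1 < 0" "\<alpha>2 * \<beta>2 < 0"
    by linarith
  then show thesis
  proof cases
    case 1
    then obtain c where "0 < c" "\<And>t. 0 \<le> t \<Longrightarrow> c \<le> 1 * X t + 1 * Y t"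
      using corner_bound_definite[of 1 1] nz by auto
    then show thesis using that[of 1 1 c] by simp
  next
    case 2
    then obtain c where "0 < c" "\<And>t. 0 \<le> t \<Longrightarrow> c \<le> \<bar>\<beta>2\<bar> * X t + \<bar>\<alpha>2\<bar> * Y t"
      using corner_bound_definite[of "\<bar>\<beta>2\<bar>" "\<bar>\<alpha>2\<bar>"] balanced[of \<alpha>2 \<beta>2] nz by auto
    then show thesis using that balanced[OF \<open>\<alpha>2 * \<beta>2 < 0\<close>] by blast
  next
    case 3
    then obtain c where "0 < c" "\<And>t. 0 \<le> t \<Longrightarrow> c \<le> \<bar>\<beta>1\<bar> * X t + \<bar>\<alpha>1\<bar> * Y t"
      using two_reaction_traj.corner_bound_definite[OF swap_reactions, of "\<bar>\<beta>1\<bar>" "\<bar>\<alpha>1\<bar>"]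
        balanced[of \<alpha>1 \<beta>1] nz by auto
    then show thesis using that balanced[OF \<open>\<alpha>1 * \<beta>1 < 0\<close>] by blast
  next
    case 4
    then show thesis using corner_bound_mixed[OF assms] that by blast
  qed
qed

lemma R1_pos_near_left_edge:
  assumes "0 < \<alpha>1" "0 < d"
  obtains e where "0 < e" "\<And>t. 0 \<le> t \<Longrightarrow> X t \<le> e \<Longrightarrow> d \<le> Y t \<Longrightarrow> Y t \<le> K \<Longrightarrow> 0 < R1 t"
proof -
  define B where "B = max (d powr \<beta>1) (K powr \<beta>1)"
  have "0 < B" using \<open>0 < d\<close> by (simp add: B_def less_max_iff_disj)
  have Y_bound: "y powr \<beta>1 \<le> B" if "d \<le> y" "y \<le> K" for y
  proof (cases "0 \<le> \<beta>1")
    case True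
    then have "y powr \<beta>1 \<le> K powr \<beta>1" using that \<open>0 < d\<close> by (intro powr_mono2) auto
    then show ?thesis by (simp add: B_def)
  next
    case False
    then have "y powr \<beta>1 \<le> d powr \<beta>1" using that \<open>0 < d\<close> by (intro powr_mono2') auto
    then show ?thesis by (simp add: B_def)
  qed
  obtain e where "0 < e" and small: "\<And>s. 0 < s \<Longrightarrow> s \<le> e \<Longrightarrow> s powr \<alpha>1 < \<kappa>1 / B"
    using powr_less_near_zero[OF \<open>0 < \<alpha>1\<close>, of "\<kappa>1 / B"] \<kappa>_pos \<open>0 < B\<close> by auto
  show thesis
  proof (rule that[OF \<open>0 < e\<close>])
    fix t assume t: "0 \<le> t" "X t \<le> e" "d \<le> Y t" "Y t \<le> K"
    have "X t powr \<alpha>1 * Y t powr \<beta>1 \<le> X t powr \<alpha>1 * B"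
      using Y_bound t(3,4) by (intro mult_left_mono) auto
    also have "\<dots> < \<kappa>1 / B * B"
      using small X_pos t(1,2) \<open>0 < B\<close> by (intro mult_strict_right_mono) auto
    finally show "0 < R1 t" using R1_pos t(1) \<open>0 < B\<close> by simp
  qed
qed

lemma R1_term_nonneg_near_left_edge:
  assumes "0 < d"
  obtains e where "0 < e" "\<And>t. 0 \<le> t \<Longrightarrow> X t \<le> e \<Longrightarrow> d \<le> Y t \<Longrightarrow> Y t \<le> K \<Longrightarrow>
    0 \<le> R1 t * \<alpha>1 \<and> (\<alpha>1 \<noteq> 0 \<longrightarrow> 0 < R1 t * \<alpha>1)"
proof -
  consider "\<alpha>1 = 0" | "0 < \<alpha>1" | "0 < - \<alpha>1" by linarith
  then show thesis
  proof cases
    case 1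
    then show thesis using that[of 1] by simp
  next
    case 2
    obtain e where "0 < e" and push: "\<And>t. 0 \<le> t \<Longrightarrow> X t \<le> e \<Longrightarrow> d \<le> Y t \<Longrightarrow> Y t \<le> K \<Longrightarrow> 0 < R1 t"
      using R1_pos_near_left_edge[OF 2 \<open>0 < d\<close>] by blast
    show thesis
    proof (rule that[OF \<open>0 < e\<close>])
      fix t assume "0 \<le> t" "X t \<le> e" "d \<le> Y t" "Y t \<le> K"
      then have "0 < R1 t" by (rule push)
      then show "0 \<le> R1 t * \<alpha>1 \<and> (\<alpha>1 \<noteq> 0 \<longrightarrow> 0 < R1 t * \<alpha>1)" using 2 by simp
    qed
  next
    case 3
    obtain e where "0 < e" and push: "\<And>t. 0 \<le> t \<Longrightarrow> X t \<le> e \<Longrightarrow> d \<le> Y t \<Longrightarrow> Y t \<le> K \<Longrightarrow> 0 < - R1 t"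
      using two_reaction_traj.R1_pos_near_left_edge[OF reverse_reaction1 3 \<open>0 < d\<close>] by blast
    show thesis
    proof (rule that[OF \<open>0 < e\<close>])
      fix t assume "0 \<le> t" "X t \<le> e" "d \<le> Y t" "Y t \<le> K"
      then have "R1 t < 0" using push by simp
      then show "0 \<le> R1 t * \<alpha>1 \<and> (\<alpha>1 \<noteq> 0 \<longrightarrow> 0 < R1 t * \<alpha>1)"
        using 3 by (simp add: mult_neg_neg less_imp_le)
    qed
  qed
qed

lemma left_edge_bound:
  assumes "\<alpha>1 \<noteq> 0 \<or> \<alpha>2 \<noteq> 0" and Y_le: "\<And>t. 0 \<le> t \<Longrightarrow> Y t \<le> K"
    and "0 < n1" "0 < n2" "0 < c" and corner: "\<And>t. 0 \<le> t \<Longrightarrow> c \<le> n1 * X t + n2 * Y t"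
  obtains \<delta> where "0 < \<delta>" "\<And>t. 0 \<le> t \<Longrightarrow> \<delta> \<le> X t"
proof -
  define d where "d = c / (2 * n2)"
  have "0 < d" using assms by (simp add: d_def)
  obtain e1 where "0 < e1" and push1: "\<And>t. 0 \<le> t \<Longrightarrow> X t \<le> e1 \<Longrightarrow> d \<le> Y t \<Longrightarrow> Y t \<le> K \<Longrightarrow>
      0 \<le> R1 t * \<alpha>1 \<and> (\<alpha>1 \<noteq> 0 \<longrightarrow> 0 < R1 t * \<alpha>1)"
    using R1_term_nonneg_near_left_edge[OF \<open>0 < d\<close>] by blast
  obtain e2 where "0 < e2" and push2: "\<And>t. 0 \<le> t \<Longrightarrow> X t \<le> e2 \<Longrightarrow> d \<le> Y t \<Longrightarrow> Y t \<le> K \<Longrightarrow>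
      0 \<le> R2 t * \<alpha>2 \<and> (\<alpha>2 \<noteq> 0 \<longrightarrow> 0 < R2 t * \<alpha>2)"
    using two_reaction_traj.R1_term_nonneg_near_left_edge[OF swap_reactions \<open>0 < d\<close>] by blast
  define \<delta> where "\<delta> = min (min e1 e2) (min (c / (2 * n1)) (X 0))"
  have "0 < \<delta>" using \<open>0 < e1\<close> \<open>0 < e2\<close> assms(3,5) X_pos[of 0] by (simp add: \<delta>_def)
  have "0 \<le> X t - \<delta>" if "0 \<le> t" for t
  proof (rule nonneg_invariant[OF _ _ _ that])
    show "((\<lambda>t. X t - \<delta>) has_real_derivative R1 s * \<alpha>1 + R2 s * \<alpha>2) (at s within {0..})"
      if "0 \<le> s" for s
      using X_deriv[OF that] by (auto intro!: derivative_eq_intros)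
    show "0 \<le> X 0 - \<delta>" by (simp add: \<delta>_def)
    fix s assume s: "0 \<le> s" "X s - \<delta> = 0"
    then have "X s \<le> e1" "X s \<le> e2" "X s \<le> c / (2 * n1)" by (simp_all add: \<delta>_def)
    then have "n1 * X s \<le> c / 2" using assms(3) by (simp add: field_simps)
    then have "d \<le> Y s"
      using corner[OF s(1)] assms(4) by (simp add: d_def field_simps)
    then show "0 < R1 s * \<alpha>1 + R2 s * \<alpha>2"
      using push1[OF s(1)] push2[OF s(1)] \<open>X s \<le> e1\<close> \<open>X s \<le> e2\<close> Y_le[OF s(1)] assms(1)
      by (auto simp: add_pos_nonneg add_nonneg_pos)
  qed
  then show thesis using that \<open>0 < \<delta>\<close> by simp
qed

lemma persistence:
  assumes indep: "\<alpha>1 * \<beta>2 - \<beta>1 * \<alpha>2 \<noteq> 0"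
    and bounded: "\<And>t. 0 \<le> t \<Longrightarrow> X t \<le> K" "\<And>t. 0 \<le> t \<Longrightarrow> Y t \<le> K"
  obtains \<delta> where "0 < \<delta>" "\<And>t. 0 \<le> t \<Longrightarrow> \<delta> \<le> X t \<and> \<delta> \<le> Y t"
proof -
  obtain n1 n2 c where n: "0 < n1" "0 < n2" "0 < c"
    and corner: "\<And>t. 0 \<le> t \<Longrightarrow> c \<le> n1 * X t + n2 * Y t"
    using corner_bound[OF indep] by blast
  have "\<alpha>1 \<noteq> 0 \<or> \<alpha>2 \<noteq> 0" "\<beta>1 \<noteq> 0 \<or> \<beta>2 \<noteq> 0" using indep by auto
  have corner': "c \<le> n2 * Y t + n1 * X t" if "0 \<le> t" for t
    using corner[OF that] by (simp add: add.commute)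
  obtain \<delta>1 where "0 < \<delta>1" "\<And>t. 0 \<le> t \<Longrightarrow> \<delta>1 \<le> X t"
    using left_edge_bound[OF \<open>\<alpha>1 \<noteq> 0 \<or> \<alpha>2 \<noteq> 0\<close> bounded(2) n corner] by blast
  moreover obtain \<delta>2 where "0 < \<delta>2" "\<And>t. 0 \<le> t \<Longrightarrow> \<delta>2 \<le> Y t"
    using two_reaction_traj.left_edge_bound[OF swap_coordinates \<open>\<beta>1 \<noteq> 0 \<or> \<beta>2 \<noteq> 0\<close> bounded(1)
        n(2,1,3) corner'] by blast
  ultimately show thesis by (intro that[of "min \<delta>1 \<delta>2"]) (auto intro: min.coboundedI1 min.coboundedI2)
qed

end

lemma diff_le_of_derivative_le:
  fixes f f' :: "real \<Rightarrow> real"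
  assumes df: "\<And>t. 0 \<le> t \<Longrightarrow> (f has_real_derivative f' t) (at t within {0..})"
    and "0 \<le> a" "a \<le> b" and bound: "\<And>t. a \<le> t \<Longrightarrow> t \<le> b \<Longrightarrow> f' t \<le> c"
  shows "f b - f a \<le> c * (b - a)"
proof -
  have "(f has_derivative (*) (f' t)) (at t within {a..b})" if "a \<le> t" "t \<le> b" for t
    using has_field_derivative_subset[OF df] that \<open>0 \<le> a\<close>
    by (auto simp: has_field_derivative_def)
  then have "\<exists>t\<in>{a..b}. f b - f a = f' t * (b - a)"
    using mvt_very_simple[OF \<open>a \<le> b\<close>, of f "\<lambda>t. (*) (f' t)"] by simp
  then obtain t where "t \<in> {a..b}" "f b - f a = f' t * (b - a)" by blast
  then show ?thesis using bound[of t] \<open>a \<le> b\<close> by (simp add: mult_right_mono)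
qed

lemma dist_le_of_vector_derivative_bound:
  fixes x :: "real \<Rightarrow> 'a::real_normed_vector"
  assumes dx: "\<And>t. 0 \<le> t \<Longrightarrow> (x has_vector_derivative v t) (at t within {0..})"
    and bound: "\<And>t. 0 \<le> t \<Longrightarrow> norm (v t) \<le> B" and "0 \<le> t" "t \<le> u"
  shows "dist (x u) (x t) \<le> B * (u - t)"
proof -
  have "norm (x u - x t) \<le> B * norm (u - t)"
  proof (rule differentiable_bound[of "{t..u}" x "\<lambda>s h. h *\<^sub>R v s"])
    show "(x has_derivative (\<lambda>h. h *\<^sub>R v s)) (at s within {t..u})" if "s \<in> {t..u}" for s
      using has_vector_derivative_within_subset[OF dx] that \<open>0 \<le> t\<close>
      by (auto simp: has_vector_derivative_def)
    show "onorm (\<lambda>h. h *\<^sub>R v s) \<le> B" if "s \<in> {t..u}" for s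
      using bound[of s] that \<open>0 \<le> t\<close>
      by (simp add: onorm_scaleR_left[OF bounded_linear_ident] onorm_id)
  qed (use \<open>t \<le> u\<close> in auto)
  then show ?thesis using \<open>t \<le> u\<close> by (simp add: dist_norm)
qed

lemma antitone_nonneg_not_frequently_dropping:
  fixes V :: "real \<Rightarrow> real"
  assumes antimono: "\<And>t u. 0 \<le> t \<Longrightarrow> t \<le> u \<Longrightarrow> V u \<le> V t"
    and nonneg: "\<And>t. 0 \<le> t \<Longrightarrow> 0 \<le> V t" and "0 < c" "0 \<le> \<tau>"
  shows "\<not> (\<forall>T. \<exists>t\<ge>T. V (t + \<tau>) \<le> V t - c)"
proof
  assume drops: "\<forall>T. \<exists>t\<ge>T. V (t + \<tau>) \<le> V t - c"
  have descent: "\<exists>t\<ge>0. V t \<le> V 0 - real n * c" for n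
  proof (induction n)
    case (Suc n)
    then obtain t where "0 \<le> t" "V t \<le> V 0 - real n * c" by blast
    moreover obtain s where "t \<le> s" "V (s + \<tau>) \<le> V s - c" using drops by blast
    ultimately have "V (s + \<tau>) \<le> V 0 - real (Suc n) * c"
      using antimono[of t s] by (simp add: algebra_simps)
    then show ?case using \<open>0 \<le> t\<close> \<open>t \<le> s\<close> \<open>0 \<le> \<tau>\<close> by (intro exI[of _ "s + \<tau>"]) simp
  qed (auto intro: exI[of _ 0])
  obtain n :: nat where "V 0 / c < n" using reals_Archimedean2 by blast
  then have "V 0 < real n * c" using \<open>0 < c\<close> by (simp add: divide_less_eq)
  with descent[of n] nonneg show False by force
qed

lemma compact_pos_lower_bound:
  fixes f :: "'a::topological_space \<Rightarrow> real"
  assumes "compact S" "continuous_on S f" "\<And>p. p \<in> S \<Longrightarrow> 0 < f p"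
  obtains \<eta> where "0 < \<eta>" "\<And>p. p \<in> S \<Longrightarrow> \<eta> \<le> f p"
proof (cases "S = {}")
  case False
  then obtain q where "q \<in> S" "\<And>p. p \<in> S \<Longrightarrow> f q \<le> f p"
    using continuous_attains_inf[OF assms(1) _ assms(2)] by blast
  then show thesis using that assms(3) by blast
qed (use that[of 1] in simp)

lemma tendsto_of_strict_Lyapunov:
  fixes x :: "real \<Rightarrow> 'a::metric_space" and \<Phi> :: "'a \<Rightarrow> real"
  assumes "compact K" and x_in: "\<And>t. 0 \<le> t \<Longrightarrow> x t \<in> K"
    and lip: "\<And>t u. 0 \<le> t \<Longrightarrow> t \<le> u \<Longrightarrow> dist (x u) (x t) \<le> B * (u - t)"
    and "continuous_on K \<Phi>" and \<Phi>_nonneg: "\<And>p. p \<in> K \<Longrightarrow> 0 \<le> \<Phi> p"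
    and \<Phi>_pos: "\<And>p. p \<in> K \<Longrightarrow> p \<noteq> A \<Longrightarrow> 0 < \<Phi> p"
    and dV: "\<And>t. 0 \<le> t \<Longrightarrow> (V has_real_derivative - \<Phi> (x t)) (at t within {0..})"
    and V_nonneg: "\<And>t. 0 \<le> t \<Longrightarrow> 0 \<le> V t"
  shows "(x \<longlongrightarrow> A) at_top"
proof (rule tendstoI, rule ccontr)
  fix \<epsilon> :: real assume "0 < \<epsilon>" and "\<not> (\<forall>\<^sub>F t in at_top. dist (x t) A < \<epsilon>)"
  then have far: "\<exists>t\<ge>T. \<epsilon> \<le> dist (x t) A" for T
    by (auto simp: eventually_at_top_linorder not_less)
  have V_antimono: "V u \<le> V t" if "0 \<le> t" "t \<le> u" for t u
    using diff_le_of_derivative_le[OF dV that, of 0] \<Phi>_nonneg x_in that by force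
  define S where "S = K \<inter> {p. \<epsilon> / 2 \<le> dist p A}"
  have "compact S"
    unfolding S_def by (intro compact_Int_closed \<open>compact K\<close> closed_Collect_le continuous_intros)
  have "0 < \<Phi> p" if "p \<in> S" for p
  proof -
    have "p \<noteq> A" using that \<open>0 < \<epsilon>\<close> by (auto simp: S_def)
    then show ?thesis using \<Phi>_pos that by (simp add: S_def)
  qed
  then obtain \<eta> where "0 < \<eta>" and \<eta>_le: "\<And>p. p \<in> S \<Longrightarrow> \<eta> \<le> \<Phi> p"
    using compact_pos_lower_bound[OF \<open>compact S\<close> continuous_on_subset[OF \<open>continuous_on K \<Phi>\<close>]]
    by (metis S_def inf_le1)
  define \<tau> where "\<tau> = \<epsilon> / (2 * max B 1)"
  have "0 < \<tau>" using \<open>0 < \<epsilon>\<close> by (simp add: \<tau>_def)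
  \<comment> \<open>By the Lipschitz bound an excursion to distance \<open>\<epsilon>\<close> from \<open>A\<close> stays \<open>\<epsilon> / 2\<close> away for the
      time \<open>\<tau>\<close>, during which \<open>\<Phi> \<ge> \<eta>\<close>.\<close>
  have drop: "V (t + \<tau>) \<le> V t - \<eta> * \<tau>" if "0 \<le> t" "\<epsilon> \<le> dist (x t) A" for t
  proof -
    have "V (t + \<tau>) - V t \<le> - \<eta> * (t + \<tau> - t)"
    proof (rule diff_le_of_derivative_le[OF dV \<open>0 \<le> t\<close>])
      fix u assume u: "t \<le> u" "u \<le> t + \<tau>"
      have "dist (x u) (x t) \<le> max B 1 * (u - t)"
        using lip[OF \<open>0 \<le> t\<close> u(1)] u(1) by (smt (verit) max.cobounded1 mult_right_mono)
      also have "\<dots> \<le> max B 1 * \<tau>" using u by (intro mult_left_mono) auto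
      also have "\<dots> = \<epsilon> / 2" by (simp add: \<tau>_def)
      finally have "\<epsilon> / 2 \<le> dist (x u) A" using that(2) dist_triangle[of "x t" A "x u"]
        by (simp add: dist_commute)
      then have "x u \<in> S" using x_in \<open>0 \<le> t\<close> u by (simp add: S_def)
      then show "- \<Phi> (x u) \<le> - \<eta>" using \<eta>_le by simp
    qed (use \<open>0 < \<tau>\<close> in auto)
    then show ?thesis by simp
  qed
  have "\<exists>t\<ge>T. V (t + \<tau>) \<le> V t - \<eta> * \<tau>" for T
  proof -
    obtain t where "max T 0 \<le> t" "\<epsilon> \<le> dist (x t) A" using far by blast
    then show ?thesis using drop[of t] by (intro exI[of _ t]) auto
  qed
  moreover have "0 < \<eta> * \<tau>" using \<open>0 < \<eta>\<close> \<open>0 < \<tau>\<close> by simp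
  ultimately show False
    using antitone_nonneg_not_frequently_dropping[where V = V, OF V_antimono V_nonneg]
      less_imp_le[OF \<open>0 < \<tau>\<close>] by blast
qed

lemma mono2_pos: "p \<in> pos_quad \<Longrightarrow> 0 < mono2 a b p"
  by (simp add: mono2_def pos_quad_def)

lemma ln_mono2: "p \<in> pos_quad \<Longrightarrow> ln (mono2 a b p) = a * ln (fst p) + b * ln (snd p)"
  by (simp add: mono2_def pos_quad_def ln_mult)

lemma mono2_eq_iff_ln:
  assumes "p \<in> pos_quad" "0 < \<kappa>"
  shows "mono2 a b p = \<kappa> \<longleftrightarrow> a * ln (fst p) + b * ln (snd p) = ln \<kappa>"
  using ln_inj_iff[OF mono2_pos[OF assms(1)] assms(2)] ln_mono2[OF assms(1)] by simp

lemma continuous_on_mono2: "S \<subseteq> pos_quad \<Longrightarrow> continuous_on S (mono2 a b)"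
  unfolding mono2_def pos_quad_def by (intro continuous_intros) auto

lemma linear_2x2_iff:
  fixes a b c d u w r s :: real
  assumes "a * d - b * c \<noteq> 0"
  shows "a * u + b * w = r \<and> c * u + d * w = s \<longleftrightarrow>
           u = (r * d - b * s) / (a * d - b * c) \<and> w = (a * s - c * r) / (a * d - b * c)"
    (is "?system \<longleftrightarrow> ?solution")
proof
  assume ?system
  then show ?solution using assms by (auto simp: field_simps)
next
  assume ?solution
  then have u: "(a * d - b * c) * u = r * d - b * s" and w: "(a * d - b * c) * w = a * s - c * r"
    using assms by simp_all
  have "(a * d - b * c) * (a * u + b * w) = a * ((a * d - b * c) * u) + b * ((a * d - b * c) * w)"
    "(a * d - b * c) * (c * u + d * w) = c * ((a * d - b * c) * u) + d * ((a * d - b * c) * w)"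
    by (simp_all add: algebra_simps)
  then have "(a * d - b * c) * (a * u + b * w) = (a * d - b * c) * r"
    "(a * d - b * c) * (c * u + d * w) = (a * d - b * c) * s"
    unfolding u w by (simp_all add: algebra_simps)
  then show ?system using assms by simp
qed

(* Cramer's rule for the log-linear system alpha_i ln x + beta_i ln y = ln kappa_i. *)
definition equilibrium :: "real \<Rightarrow> real \<Rightarrow> real \<Rightarrow> real \<Rightarrow> real \<Rightarrow> real \<Rightarrow> real \<times> real" where
  "equilibrium \<alpha>1 \<beta>1 \<alpha>2 \<beta>2 \<kappa>1 \<kappa>2 =
     (exp ((ln \<kappa>1 * \<beta>2 - \<beta>1 * ln \<kappa>2) / (\<alpha>1 * \<beta>2 - \<beta>1 * \<alpha>2)),
      exp ((\<alpha>1 * ln \<kappa>2 - \<alpha>2 * ln \<kappa>1) / (\<alpha>1 * \<beta>2 - \<beta>1 * \<alpha>2)))"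

lemma monomial_levels_meet_at_equilibrium:
  assumes "\<alpha>1 * \<beta>2 - \<beta>1 * \<alpha>2 \<noteq> 0" "0 < \<kappa>1" "0 < \<kappa>2"
  shows "{p \<in> pos_quad. mono2 \<alpha>1 \<beta>1 p = \<kappa>1} \<inter> {p \<in> pos_quad. mono2 \<alpha>2 \<beta>2 p = \<kappa>2}
           = {equilibrium \<alpha>1 \<beta>1 \<alpha>2 \<beta>2 \<kappa>1 \<kappa>2}"
proof -
  define E where "E = equilibrium \<alpha>1 \<beta>1 \<alpha>2 \<beta>2 \<kappa>1 \<kappa>2"
  have "E \<in> pos_quad" by (simp add: E_def equilibrium_def pos_quad_def)
  have "mono2 \<alpha>1 \<beta>1 p = \<kappa>1 \<and> mono2 \<alpha>2 \<beta>2 p = \<kappa>2 \<longleftrightarrow> p = E" if "p \<in> pos_quad" for p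
  proof -
    have "mono2 \<alpha>1 \<beta>1 p = \<kappa>1 \<and> mono2 \<alpha>2 \<beta>2 p = \<kappa>2 \<longleftrightarrow> ln (fst p) = ln (fst E) \<and> ln (snd p) = ln (snd E)"
      using mono2_eq_iff_ln[OF that assms(2)] mono2_eq_iff_ln[OF that assms(3)]
        linear_2x2_iff[OF assms(1), of "ln (fst p)" "ln (snd p)" "ln \<kappa>1" "ln \<kappa>2"]
      by (simp add: E_def equilibrium_def)
    also have "\<dots> \<longleftrightarrow> p = E"
      using that \<open>E \<in> pos_quad\<close> by (simp add: pos_quad_def prod_eq_iff)
    finally show ?thesis .
  qed
  then show ?thesis using \<open>E \<in> pos_quad\<close> unfolding E_def by blast
qed

definition reaction_rate :: "real \<Rightarrow> real \<Rightarrow> real \<Rightarrow> real \<Rightarrow> real \<Rightarrow> real \<Rightarrow> real \<times> real \<Rightarrow> real" where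
  "reaction_rate a b a' b' k k' p = k * mono2 a b p - k' * mono2 a' b' p"

lemma ma_field_eq:
  "ma_field a1 b1 a1' b1' a2 b2 a2' b2' k1 k2 k3 k4 p =
     reaction_rate a1 b1 a1' b1' k1 k2 p *\<^sub>R (a1' - a1, b1' - b1)
   + reaction_rate a2 b2 a2' b2' k3 k4 p *\<^sub>R (a2' - a2, b2' - b2)"
  by (simp add: ma_field_def reaction_rate_def)

lemma reaction_rate_factor:
  assumes "p \<in> pos_quad" "k' \<noteq> 0"
  shows "reaction_rate a b a' b' k k' p = k' * mono2 a b p * (k / k' - mono2 (a' - a) (b' - b) p)"
proof -
  have "fst p powr a' = fst p powr a * fst p powr (a' - a)"
    "snd p powr b' = snd p powr b * snd p powr (b' - b)"
    by (simp_all add: powr_add[symmetric])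
  then have "mono2 a' b' p = mono2 a b p * mono2 (a' - a) (b' - b) p"
    by (simp add: mono2_def algebra_simps)
  then show ?thesis using assms(2) by (simp add: reaction_rate_def algebra_simps)
qed

definition rel_entropy :: "real \<Rightarrow> real \<Rightarrow> real" where
  "rel_entropy c s = s * (ln s - ln c) - s + c"

lemma rel_entropy_nonneg:
  assumes "0 < c" "0 < s"
  shows "0 \<le> rel_entropy c s"
proof -
  have "ln c - ln s \<le> c / s - 1"
    using ln_le_minus_one[of "c / s"] assms by (simp add: ln_div)
  then have "s * (ln c - ln s) \<le> s * (c / s - 1)" using assms by (intro mult_left_mono) auto
  then show ?thesis using assms by (simp add: rel_entropy_def algebra_simps)
qed

lemma rel_entropy_ge:
  assumes "0 < c" "c * exp 2 \<le> s"
  shows "s \<le> rel_entropy c s"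
proof -
  have "0 < s" using assms by (smt (verit) exp_gt_zero mult_pos_pos)
  then have "ln (c * exp 2) \<le> ln s" using assms by simp
  then have "2 \<le> ln s - ln c" using assms by (simp add: ln_mult)
  then have "s * 2 \<le> s * (ln s - ln c)" using \<open>0 < s\<close> by (intro mult_left_mono) auto
  then show ?thesis using assms by (simp add: rel_entropy_def)
qed

lemma rel_entropy_deriv:
  assumes "(f has_real_derivative D) (at t within S)" "0 < f t"
  shows "((\<lambda>t. rel_entropy c (f t)) has_real_derivative (ln (f t) - ln c) * D) (at t within S)"
  unfolding rel_entropy_def
  using assms by (auto intro!: derivative_eq_intros simp: field_simps)

lemma diff_mult_ln_diff_nonneg:
  fixes m \<kappa> :: real
  assumes "0 < m" "0 < \<kappa>"
  shows "0 \<le> (m - \<kappa>) * (ln m - ln \<kappa>)"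
  using assms by (cases "m \<le> \<kappa>") (auto intro: mult_nonpos_nonpos)

lemma diff_mult_ln_diff_pos:
  fixes m \<kappa> :: real
  assumes "0 < m" "0 < \<kappa>" "m \<noteq> \<kappa>"
  shows "0 < (m - \<kappa>) * (ln m - ln \<kappa>)"
  using assms by (cases "m < \<kappa>") (auto intro: mult_neg_neg)

locale mass_action_solution =
  fixes a1 b1 a1' b1' a2 b2 a2' b2' k1 k2 k3 k4 :: real and x :: "real \<Rightarrow> real \<times> real"
  assumes indep: "(a1' - a1) * (b2' - b2) - (b1' - b1) * (a2' - a2) \<noteq> 0"
    and rates_pos: "0 < k1" "0 < k2" "0 < k3" "0 < k4"
    and solution: "is_solution a1 b1 a1' b1' a2 b2 a2' b2' k1 k2 k3 k4 x"
begin

definition "X t = fst (x t)"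
definition "Y t = snd (x t)"
definition "R1 t = reaction_rate a1 b1 a1' b1' k1 k2 (x t)"
definition "R2 t = reaction_rate a2 b2 a2' b2' k3 k4 (x t)"
definition "A = equilibrium (a1' - a1) (b1' - b1) (a2' - a2) (b2' - b2) (k1 / k2) (k3 / k4)"

lemma x_in_pos_quad: "0 \<le> t \<Longrightarrow> x t \<in> pos_quad"
  using solution by (simp add: is_solution_def)

lemma x_deriv:
  "0 \<le> t \<Longrightarrow>
    (x has_vector_derivative ma_field a1 b1 a1' b1' a2 b2 a2' b2' k1 k2 k3 k4 (x t)) (at t within {0..})"
  using solution by (simp add: is_solution_def)

lemma X_deriv:
  "0 \<le> t \<Longrightarrow> (X has_real_derivative R1 t * (a1' - a1) + R2 t * (a2' - a2)) (at t within {0..})"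
  using bounded_linear.has_vector_derivative[OF bounded_linear_fst x_deriv]
  by (simp add: has_real_derivative_iff_has_vector_derivative X_def[abs_def] R1_def R2_def ma_field_eq)

lemma Y_deriv:
  "0 \<le> t \<Longrightarrow> (Y has_real_derivative R1 t * (b1' - b1) + R2 t * (b2' - b2)) (at t within {0..})"
  using bounded_linear.has_vector_derivative[OF bounded_linear_snd x_deriv]
  by (simp add: has_real_derivative_iff_has_vector_derivative Y_def[abs_def] R1_def R2_def ma_field_eq)

lemma R1_eq: "0 \<le> t \<Longrightarrow> R1 t = k2 * mono2 a1 b1 (x t) * (k1 / k2 - mono2 (a1' - a1) (b1' - b1) (x t))"
  using reaction_rate_factor[OF x_in_pos_quad] rates_pos by (simp add: R1_def)

lemma R2_eq: "0 \<le> t \<Longrightarrow> R2 t = k4 * mono2 a2 b2 (x t) * (k3 / k4 - mono2 (a2' - a2) (b2' - b2) (x t))"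
  using reaction_rate_factor[OF x_in_pos_quad] rates_pos by (simp add: R2_def)

lemma two_reaction_traj:
  "two_reaction_traj X Y R1 R2 (a1' - a1) (b1' - b1) (a2' - a2) (b2' - b2) (k1 / k2) (k3 / k4)"
proof unfold_locales
  fix t :: real assume "0 \<le> t"
  note pos = x_in_pos_quad[OF \<open>0 \<le> t\<close>]
  have mono2_x: "mono2 a b (x t) = X t powr a * Y t powr b" for a b
    by (simp add: mono2_def X_def Y_def)
  have "0 < k2 * mono2 a1 b1 (x t)" "0 < k4 * mono2 a2 b2 (x t)"
    using mono2_pos[OF pos] rates_pos by simp_all
  then show "X t powr (a1' - a1) * Y t powr (b1' - b1) < k1 / k2 \<Longrightarrow> 0 < R1 t"
    and "k1 / k2 < X t powr (a1' - a1) * Y t powr (b1' - b1) \<Longrightarrow> R1 t < 0"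
    and "X t powr (a2' - a2) * Y t powr (b2' - b2) < k3 / k4 \<Longrightarrow> 0 < R2 t"
    and "k3 / k4 < X t powr (a2' - a2) * Y t powr (b2' - b2) \<Longrightarrow> R2 t < 0"
    unfolding R1_eq[OF \<open>0 \<le> t\<close>] R2_eq[OF \<open>0 \<le> t\<close>] mono2_x
    by (simp_all add: mult_pos_neg)
  show "0 < X t" "0 < Y t" using pos by (simp_all add: X_def Y_def pos_quad_def)
qed (use X_deriv Y_deriv rates_pos in auto)

lemma A_pos: "A \<in> pos_quad"
  by (simp add: A_def equilibrium_def pos_quad_def)

lemma A_levels: "p \<in> pos_quad \<Longrightarrow>
    mono2 (a1' - a1) (b1' - b1) p = k1 / k2 \<and> mono2 (a2' - a2) (b2' - b2) p = k3 / k4 \<longleftrightarrow> p = A"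
  using monomial_levels_meet_at_equilibrium[OF indep, of "k1 / k2" "k3 / k4"] rates_pos
  by (auto simp: A_def)

definition "dissipation p =
    k2 * mono2 a1 b1 p
      * ((mono2 (a1' - a1) (b1' - b1) p - k1 / k2) * (ln (mono2 (a1' - a1) (b1' - b1) p) - ln (k1 / k2)))
  + k4 * mono2 a2 b2 p
      * ((mono2 (a2' - a2) (b2' - b2) p - k3 / k4) * (ln (mono2 (a2' - a2) (b2' - b2) p) - ln (k3 / k4)))"

definition "free_energy t = rel_entropy (fst A) (X t) + rel_entropy (snd A) (Y t)"

lemma dissipation_nonneg:
  assumes "p \<in> pos_quad"
  shows "0 \<le> dissipation p"
proof -
  have "0 \<le> (mono2 a b p - \<kappa>) * (ln (mono2 a b p) - ln \<kappa>)" if "0 < \<kappa>" for a b \<kappa>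
    using diff_mult_ln_diff_nonneg[OF mono2_pos[OF assms] that] .
  then show ?thesis
    unfolding dissipation_def using mono2_pos[OF assms] rates_pos
    by (intro add_nonneg_nonneg mult_nonneg_nonneg[OF mult_nonneg_nonneg]) (simp_all add: less_imp_le)
qed

lemma dissipation_pos:
  assumes "p \<in> pos_quad" "p \<noteq> A"
  shows "0 < dissipation p"
proof -
  have nonneg: "0 \<le> (mono2 a b p - \<kappa>) * (ln (mono2 a b p) - ln \<kappa>)" if "0 < \<kappa>" for a b \<kappa>
    using diff_mult_ln_diff_nonneg[OF mono2_pos[OF assms(1)] that] .
  have pos: "0 < (mono2 a b p - \<kappa>) * (ln (mono2 a b p) - ln \<kappa>)" if "0 < \<kappa>" "mono2 a b p \<noteq> \<kappa>" for a b \<kappa>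
    using diff_mult_ln_diff_pos[OF mono2_pos[OF assms(1)] that] .
  have weights: "0 < k2 * mono2 a1 b1 p" "0 < k4 * mono2 a2 b2 p"
    using mono2_pos[OF assms(1)] rates_pos by simp_all
  have "mono2 (a1' - a1) (b1' - b1) p \<noteq> k1 / k2 \<or> mono2 (a2' - a2) (b2' - b2) p \<noteq> k3 / k4"
    using A_levels[OF assms(1)] assms(2) by blast
  then show ?thesis
    unfolding dissipation_def using weights rates_pos
    by (elim disjE; intro add_pos_nonneg add_nonneg_pos mult_pos_pos[OF _ pos]
        mult_nonneg_nonneg[OF less_imp_le nonneg]) simp_all
qed

lemma free_energy_deriv:
  assumes "0 \<le> t"
  shows "(free_energy has_real_derivative - dissipation (x t)) (at t within {0..})"
proof -
  have pos: "0 < X t" "0 < Y t" "0 < fst A" "0 < snd A"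
    using x_in_pos_quad[OF assms] A_pos by (simp_all add: X_def Y_def pos_quad_def)
  have deriv: "(free_energy has_real_derivative
      (ln (X t) - ln (fst A)) * (R1 t * (a1' - a1) + R2 t * (a2' - a2))
    + (ln (Y t) - ln (snd A)) * (R1 t * (b1' - b1) + R2 t * (b2' - b2))) (at t within {0..})"
    unfolding free_energy_def[abs_def]
    by (intro DERIV_add rel_entropy_deriv X_deriv Y_deriv assms pos)
  have "mono2 (a1' - a1) (b1' - b1) A = k1 / k2" "mono2 (a2' - a2) (b2' - b2) A = k3 / k4"
    using A_levels[OF A_pos] by simp_all
  then have ln_\<kappa>: "ln (k1 / k2) = (a1' - a1) * ln (fst A) + (b1' - b1) * ln (snd A)"
    "ln (k3 / k4) = (a2' - a2) * ln (fst A) + (b2' - b2) * ln (snd A)"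
    using ln_mono2[OF A_pos, of "a1' - a1" "b1' - b1"] ln_mono2[OF A_pos, of "a2' - a2" "b2' - b2"]
    by simp_all
  have ln_x: "ln (mono2 a b (x t)) = a * ln (X t) + b * ln (Y t)" for a b
    using ln_mono2[OF x_in_pos_quad[OF assms]] by (simp add: X_def Y_def)
  have "(ln (X t) - ln (fst A)) * (R1 t * (a1' - a1) + R2 t * (a2' - a2))
      + (ln (Y t) - ln (snd A)) * (R1 t * (b1' - b1) + R2 t * (b2' - b2))
    = R1 t * (((a1' - a1) * ln (X t) + (b1' - b1) * ln (Y t))
              - ((a1' - a1) * ln (fst A) + (b1' - b1) * ln (snd A)))
    + R2 t * (((a2' - a2) * ln (X t) + (b2' - b2) * ln (Y t))
              - ((a2' - a2) * ln (fst A) + (b2' - b2) * ln (snd A)))"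
    by (simp add: algebra_simps)
  also have "\<dots> = R1 t * (ln (mono2 (a1' - a1) (b1' - b1) (x t)) - ln (k1 / k2))
                + R2 t * (ln (mono2 (a2' - a2) (b2' - b2) (x t)) - ln (k3 / k4))"
    unfolding ln_x ln_\<kappa> ..
  also have "\<dots> = - dissipation (x t)"
  proof -
    have flip: "k * M * (\<kappa> - m) * L = - (k * M * ((m - \<kappa>) * L))" for k M \<kappa> m L :: real
      by (simp add: algebra_simps)
    show ?thesis unfolding R1_eq[OF assms] R2_eq[OF assms] dissipation_def flip by simp
  qed
  finally show ?thesis by (rule DERIV_cong[OF deriv])
qed

lemma free_energy_le_initial:
  assumes "0 \<le> t"
  shows "free_energy t \<le> free_energy 0"
proof -
  have "free_energy t - free_energy 0 \<le> 0 * (t - 0)"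
    by (rule diff_le_of_derivative_le[OF free_energy_deriv])
      (use assms dissipation_nonneg x_in_pos_quad in auto)
  then show ?thesis by simp
qed

lemma bounded_above:
  obtains M where "\<And>t. 0 \<le> t \<Longrightarrow> X t \<le> M \<and> Y t \<le> M"
proof
  define M where "M = max (max (fst A * exp 2) (snd A * exp 2)) (free_energy 0)"
  fix t :: real assume "0 \<le> t"
  have pos: "0 < X t" "0 < Y t" "0 < fst A" "0 < snd A"
    using x_in_pos_quad[OF \<open>0 \<le> t\<close>] A_pos by (simp_all add: X_def Y_def pos_quad_def)
  have "0 \<le> rel_entropy (fst A) (X t)" "0 \<le> rel_entropy (snd A) (Y t)"
    using rel_entropy_nonneg pos by simp_all
  then have "rel_entropy (fst A) (X t) \<le> free_energy 0" "rel_entropy (snd A) (Y t) \<le> free_energy 0"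
    using free_energy_le_initial[OF \<open>0 \<le> t\<close>] by (simp_all add: free_energy_def)
  then show "X t \<le> M \<and> Y t \<le> M"
    using rel_entropy_ge[of "fst A" "X t"] rel_entropy_ge[of "snd A" "Y t"] pos
    unfolding M_def by (smt (verit) max.cobounded1 max.cobounded2)
qed

lemma bounded_below:
  obtains \<delta> where "0 < \<delta>" "\<And>t. 0 \<le> t \<Longrightarrow> \<delta> \<le> X t \<and> \<delta> \<le> Y t"
proof -
  obtain M where "\<And>t. 0 \<le> t \<Longrightarrow> X t \<le> M \<and> Y t \<le> M" using bounded_above by blast
  then show thesis
    using two_reaction_traj.persistence[OF two_reaction_traj indep] that by blast
qed

lemma tendsto_equilibrium: "(x \<longlongrightarrow> A) at_top"
proof -
  obtain M where M: "\<And>t. 0 \<le> t \<Longrightarrow> X t \<le> M \<and> Y t \<le> M" using bounded_above by blast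
  obtain \<delta> where "0 < \<delta>" and \<delta>: "\<And>t. 0 \<le> t \<Longrightarrow> \<delta> \<le> X t \<and> \<delta> \<le> Y t" using bounded_below by blast
  define K where "K = {\<delta>..M} \<times> {\<delta>..M}"
  have "compact K" by (simp add: K_def compact_Times)
  have "K \<subseteq> pos_quad" using \<open>0 < \<delta>\<close> by (auto simp: K_def pos_quad_def)
  have x_in_K: "x t \<in> K" if "0 \<le> t" for t
    using M[OF that] \<delta>[OF that] by (simp add: K_def X_def Y_def mem_Times_iff)
  have "continuous_on K (ma_field a1 b1 a1' b1' a2 b2 a2' b2' k1 k2 k3 k4)"
    unfolding ma_field_def[abs_def]
    by (intro continuous_intros continuous_on_mono2 \<open>K \<subseteq> pos_quad\<close>)
  then have "bounded (ma_field a1 b1 a1' b1' a2 b2 a2' b2' k1 k2 k3 k4 ` K)"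
    by (intro compact_imp_bounded compact_continuous_image \<open>compact K\<close>)
  then obtain B where B: "\<And>p. p \<in> K \<Longrightarrow> norm (ma_field a1 b1 a1' b1' a2 b2 a2' b2' k1 k2 k3 k4 p) \<le> B"
    unfolding bounded_iff by blast
  have "mono2 a b p \<noteq> 0" if "p \<in> K" for a b p
    using mono2_pos[of p a b] that \<open>K \<subseteq> pos_quad\<close> by auto
  then have "continuous_on K dissipation"
    unfolding dissipation_def[abs_def]
    by (intro continuous_intros continuous_on_mono2 \<open>K \<subseteq> pos_quad\<close>) blast+
  show ?thesis
  proof (rule tendsto_of_strict_Lyapunov[OF \<open>compact K\<close> x_in_K _ \<open>continuous_on K dissipation\<close>])
    show "dist (x u) (x t) \<le> B * (u - t)" if "0 \<le> t" "t \<le> u" for t u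
      using dist_le_of_vector_derivative_bound[OF x_deriv B[OF x_in_K] that] .
    show "0 \<le> dissipation p" "p \<noteq> A \<Longrightarrow> 0 < dissipation p" if "p \<in> K" for p
      using dissipation_nonneg[of p] dissipation_pos[of p] that \<open>K \<subseteq> pos_quad\<close> by auto
    show "0 \<le> free_energy t" if "0 \<le> t" for t
      using x_in_pos_quad[OF that] A_pos
      by (simp add: free_energy_def X_def Y_def pos_quad_def rel_entropy_nonneg add_nonneg_nonneg)
    show "(free_energy has_real_derivative - dissipation (x t)) (at t within {0..})" if "0 \<le> t" for t
      using free_energy_deriv[OF that] .
  qed
qed

end

theorem mass_action_tendsto_equilibrium:
  assumes "(a1' - a1) * (b2' - b2) - (b1' - b1) * (a2' - a2) \<noteq> 0"
    and "0 < k1" "0 < k2" "0 < k3" "0 < k4"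
    and "is_solution a1 b1 a1' b1' a2 b2 a2' b2' k1 k2 k3 k4 x"
  shows "(x \<longlongrightarrow> equilibrium (a1' - a1) (b1' - b1) (a2' - a2) (b2' - b2) (k1 / k2) (k3 / k4)) at_top"
proof -
  interpret mass_action_solution a1 b1 a1' b1' a2 b2 a2' b2' k1 k2 k3 k4 x
    using assms by unfold_locales
  show ?thesis using tendsto_equilibrium by (simp add: A_def)
qed

theorem lemma4p1:
  fixes a1 b1 a1' b1' a2 b2 a2' b2' \<epsilon> k1 k2 k3 k4 :: real
    and x :: "real \<Rightarrow> real \<times> real"
  assumes nonneg: "a1 \<ge> 0" "b1 \<ge> 0" "a1' \<ge> 0" "b1' \<ge> 0"
                  "a2 \<ge> 0" "b2 \<ge> 0" "a2' \<ge> 0" "b2' \<ge> 0"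
    and indep: "(a1' - a1) * (b2' - b2) - (b1' - b1) * (a2' - a2) \<noteq> 0"
    and eps: "0 < \<epsilon>" "\<epsilon> < 1"
    and sol: "is_solution a1 b1 a1' b1' a2 b2 a2' b2' k1 k2 k3 k4 x"
  defines "C1 \<equiv> {p \<in> pos_quad. mono2 (a1' - a1) (b1' - b1) p = 1 / \<epsilon>\<^sup>2}"
    and "C2 \<equiv> {p \<in> pos_quad. mono2 (a1' - a1) (b1' - b1) p = \<epsilon>\<^sup>2}"
    and "C3 \<equiv> {p \<in> pos_quad. mono2 (a2' - a2) (b2' - b2) p = \<epsilon>\<^sup>2}"
    and "C4 \<equiv> {p \<in> pos_quad. mono2 (a2' - a2) (b2' - b2) p = 1 / \<epsilon>\<^sup>2}"
  shows "(k1 = \<epsilon> \<and> k2 = 1 / \<epsilon> \<and> k3 = 1 / \<epsilon> \<and> k4 = \<epsilon> \<longrightarrow>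
            (\<exists>A. C2 \<inter> C4 = {A} \<and> (x \<longlongrightarrow> A) at_top))
       \<and> (k1 = 1 / \<epsilon> \<and> k2 = \<epsilon> \<and> k3 = 1 / \<epsilon> \<and> k4 = \<epsilon> \<longrightarrow>
            (\<exists>B. C1 \<inter> C4 = {B} \<and> (x \<longlongrightarrow> B) at_top))
       \<and> (k1 = 1 / \<epsilon> \<and> k2 = \<epsilon> \<and> k3 = \<epsilon> \<and> k4 = 1 / \<epsilon> \<longrightarrow>
            (\<exists>C. C1 \<inter> C3 = {C} \<and> (x \<longlongrightarrow> C) at_top))
       \<and> (k1 = \<epsilon> \<and> k2 = 1 / \<epsilon> \<and> k3 = \<epsilon> \<and> k4 = 1 / \<epsilon> \<longrightarrow>
            (\<exists>D. C2 \<inter> C3 = {D} \<and> (x \<longlongrightarrow> D) at_top))"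
proof -
  have converges: "\<exists>P. {p \<in> pos_quad. mono2 (a1' - a1) (b1' - b1) p = \<kappa>1}
                   \<inter> {p \<in> pos_quad. mono2 (a2' - a2) (b2' - b2) p = \<kappa>2} = {P} \<and> (x \<longlongrightarrow> P) at_top"
    if "0 < k1" "0 < k2" "0 < k3" "0 < k4" "\<kappa>1 = k1 / k2" "\<kappa>2 = k3 / k4" for \<kappa>1 \<kappa>2
    using monomial_levels_meet_at_equilibrium[OF indep, of \<kappa>1 \<kappa>2]
      mass_action_tendsto_equilibrium[OF indep that(1-4) sol] that
    by auto
  have ratios: "\<epsilon>\<^sup>2 = \<epsilon> / (1 / \<epsilon>)" "1 / \<epsilon>\<^sup>2 = (1 / \<epsilon>) / \<epsilon>" "0 < 1 / \<epsilon>"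
    using eps by (simp_all add: power2_eq_square)
  show ?thesis
    unfolding C1_def C2_def C3_def C4_def
    by (intro conjI impI; elim conjE; rule converges) (use ratios eps in simp_all)
qed

end
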